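(* Fix $l,r>0$, $0<\alpha<\beta<1$ and $\delta\in(-1,1)$, and let $A_M=l+\frac{\alpha}{1-\beta}r$. Then for every $Q_0\in\mathbb{R}$ the functions $A\mapsto G_1(Q_0,A,\delta)$ and $A\mapsto G_2(Q_0,A,\delta)$ are continuous on $(0,A_M)$. Moreover, on $(0,A_M)$ one has $\partial_A N>0$ and $\partial_A B<0$.
   Context: With $\delta=\frac{D_2-D_1}{D_2+D_1}$ for diffusion constants $D_1,D_2>0$, for $Q_0\in\mathbb{R}$ and $A>0$ define $B=B(A)=\frac{1-\beta}{\alpha}(l-A)+r$, $S_a=\sqrt{Q_0^2+A^2}$, $S_b=\sqrt{Q_0^2+B^2}$, $N=N(A)=A-l+S_a-S_b$, and $G_1(Q_0,A,\delta)=\delta\Big(\ln\frac{S_a+\delta Q_0}{S_b+\delta Q_0}+\ln\frac{l}{r}\Big)-(1+\delta)\ln\frac{A}{B}+\ln\frac{S_a-Q_0}{S_b-Q_0}$, $G_2(Q_0,A,\delta)=\delta Q_0\ln\frac{S_a+\delta Q_0}{S_b+\delta Q_0}-N$. (These arise from the zero-current Poisson–Nernst–Planck problem for two ion species with valences $\pm1$: $l,r$ are boundary concentrations, $Q_2=2Q_0$ is the permanent charge on $(a,b)\subset(0,1)$, $\alpha=H(a)/H(1)$, $\beta=H(b)/H(1)$ with $H(x)=\int_0^x ds/h(s)$, $h>0$ the cross-sectional area.) *)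

theory Defs
  imports "HOL-Analysis.Analysis"
begin

text \<open>Parameters: boundary concentrations l, r; alpha = H(a)/H(1), beta = H(b)/H(1).\<close>

definition BB :: "real \<Rightarrow> real \<Rightarrow> real \<Rightarrow> real \<Rightarrow> real \<Rightarrow> real" where
  "BB l r \<alpha> \<beta> A = (1 - \<beta>) / \<alpha> * (l - A) + r"

definition Sa :: "real \<Rightarrow> real \<Rightarrow> real" where
  "Sa Q0 A = sqrt (Q0^2 + A^2)"

definition Sb :: "real \<Rightarrow> real \<Rightarrow> real \<Rightarrow> real \<Rightarrow> real \<Rightarrow> real \<Rightarrow> real" where
  "Sb l r \<alpha> \<beta> Q0 A = sqrt (Q0^2 + (BB l r \<alpha> \<beta> A)^2)"

definition NN :: "real \<Rightarrow> real \<Rightarrow> real \<Rightarrow> real \<Rightarrow> real \<Rightarrow> real \<Rightarrow> real" where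
  "NN l r \<alpha> \<beta> Q0 A = A - l + Sa Q0 A - Sb l r \<alpha> \<beta> Q0 A"

definition G1 :: "real \<Rightarrow> real \<Rightarrow> real \<Rightarrow> real \<Rightarrow> real \<Rightarrow> real \<Rightarrow> real \<Rightarrow> real" where
  "G1 l r \<alpha> \<beta> Q0 A \<delta> =
     \<delta> * (ln ((Sa Q0 A + \<delta> * Q0) / (Sb l r \<alpha> \<beta> Q0 A + \<delta> * Q0)) + ln (l / r))
     - (1 + \<delta>) * ln (A / BB l r \<alpha> \<beta> A)
     + ln ((Sa Q0 A - Q0) / (Sb l r \<alpha> \<beta> Q0 A - Q0))"

definition G2 :: "real \<Rightarrow> real \<Rightarrow> real \<Rightarrow> real \<Rightarrow> real \<Rightarrow> real \<Rightarrow> real \<Rightarrow> real" where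
  "G2 l r \<alpha> \<beta> Q0 A \<delta> =
     \<delta> * Q0 * ln ((Sa Q0 A + \<delta> * Q0) / (Sb l r \<alpha> \<beta> Q0 A + \<delta> * Q0)) - NN l r \<alpha> \<beta> Q0 A"

end

theory Submission
  imports Defs
begin

text \<open>On \<open>(0, A\<^sub>M)\<close> both \<open>A\<close> and \<open>B(A)\<close> are positive, since \<open>B\<close> is affine with slope
  \<open>-(1-\<beta>)/\<alpha> < 0\<close> and vanishes exactly at \<open>A\<^sub>M\<close>. Then \<open>S\<^sub>a, S\<^sub>b > \<bar>Q\<^sub>0\<bar>\<close>, so for
  \<open>\<bar>\<delta>\<bar> \<le> 1\<close> every argument of a logarithm and every denominator in \<open>G\<^sub>1, G\<^sub>2\<close> is
  positive, which gives continuity. Differentiating \<open>N\<close> yields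
  \<open>\<partial>\<^sub>A N = 1 + A/S\<^sub>a + (1-\<beta>)/\<alpha> \<cdot> B/S\<^sub>b\<close>, a sum of positive terms.\<close>

lemma abs_less_sqrt_add_square:
  fixes q y :: real
  assumes "y \<noteq> 0"
  shows "\<bar>q\<bar> < sqrt (q\<^sup>2 + y\<^sup>2)"
proof -
  have "sqrt (q\<^sup>2) < sqrt (q\<^sup>2 + y\<^sup>2)"
    using assms by (intro real_sqrt_less_mono) simp
  then show ?thesis by simp
qed

lemma add_mult_pos_of_abs_less:
  fixes q s d :: real
  assumes "\<bar>q\<bar> < s" and "\<bar>d\<bar> \<le> 1"
  shows "0 < s + d * q"
proof -
  have "\<bar>d * q\<bar> \<le> \<bar>q\<bar>"
    using assms(2) by (simp add: abs_mult mult_left_le_one_le)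
  then show ?thesis using assms(1) by linarith
qed

lemma BB_eq_affine: "BB l r \<alpha> \<beta> = (\<lambda>A. r + (1 - \<beta>) / \<alpha> * (l - A))"
  by (simp add: BB_def fun_eq_iff)

lemma BB_has_real_derivative: "(BB l r \<alpha> \<beta> has_real_derivative - ((1 - \<beta>) / \<alpha>)) (at A)"
  unfolding BB_eq_affine by (rule derivative_eq_intros refl)+ (simp add: minus_divide_left)

lemma BB_pos:
  assumes "0 < \<alpha>" and "\<beta> < 1" and "A < l + \<alpha> / (1 - \<beta>) * r"
  shows "0 < BB l r \<alpha> \<beta> A"
proof -
  have "(1 - \<beta>) / \<alpha> * A < (1 - \<beta>) / \<alpha> * (l + \<alpha> / (1 - \<beta>) * r)"
    using assms by (intro mult_strict_left_mono) auto
  also have "\<dots> = (1 - \<beta>) / \<alpha> * l + r"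
    using assms by (simp add: field_simps)
  finally show ?thesis by (simp add: BB_def right_diff_distrib)
qed

lemma abs_less_Sa: "A \<noteq> 0 \<Longrightarrow> \<bar>Q0\<bar> < Sa Q0 A"
  unfolding Sa_def by (rule abs_less_sqrt_add_square)

lemma abs_less_Sb: "BB l r \<alpha> \<beta> A \<noteq> 0 \<Longrightarrow> \<bar>Q0\<bar> < Sb l r \<alpha> \<beta> Q0 A"
  unfolding Sb_def by (rule abs_less_sqrt_add_square)

lemma continuous_on_BB: "continuous_on S (BB l r \<alpha> \<beta>)"
  unfolding BB_eq_affine by (intro continuous_intros)

lemma continuous_on_Sa: "continuous_on S (Sa Q0)"
  unfolding Sa_def [abs_def] by (intro continuous_intros)

lemma continuous_on_Sb: "continuous_on S (Sb l r \<alpha> \<beta> Q0)"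
  unfolding Sb_def [abs_def] by (intro continuous_intros continuous_on_BB)

lemma Sa_add_mult_pos: "A \<noteq> 0 \<Longrightarrow> \<bar>d\<bar> \<le> 1 \<Longrightarrow> 0 < Sa Q0 A + d * Q0"
  by (intro add_mult_pos_of_abs_less abs_less_Sa)

lemma Sb_add_mult_pos: "BB l r \<alpha> \<beta> A \<noteq> 0 \<Longrightarrow> \<bar>d\<bar> \<le> 1 \<Longrightarrow> 0 < Sb l r \<alpha> \<beta> Q0 A + d * Q0"
  by (intro add_mult_pos_of_abs_less abs_less_Sb)

lemma continuous_on_G1:
  assumes nonzero: "\<And>A. A \<in> S \<Longrightarrow> A \<noteq> 0 \<and> BB l r \<alpha> \<beta> A \<noteq> 0" and "\<bar>\<delta>\<bar> \<le> 1"
  shows "continuous_on S (\<lambda>A. G1 l r \<alpha> \<beta> Q0 A \<delta>)"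
proof -
  have pos: "0 < Sa Q0 A + d * Q0 \<and> 0 < Sb l r \<alpha> \<beta> Q0 A + d * Q0"
    if "A \<in> S" and "\<bar>d\<bar> \<le> 1" for A d
    using nonzero[OF that(1)] that(2) by (simp add: Sa_add_mult_pos Sb_add_mult_pos)
  \<comment> \<open>the factors \<open>S - Q\<^sub>0\<close> are the case \<open>d = -1\<close>\<close>
  from pos[of _ \<delta>] pos[of _ "-1"] show ?thesis
    unfolding G1_def using nonzero \<open>\<bar>\<delta>\<bar> \<le> 1\<close>
    by (intro continuous_intros continuous_on_BB continuous_on_Sa continuous_on_Sb) fastforce+
qed

lemma continuous_on_G2:
  assumes nonzero: "\<And>A. A \<in> S \<Longrightarrow> A \<noteq> 0 \<and> BB l r \<alpha> \<beta> A \<noteq> 0" and "\<bar>\<delta>\<bar> \<le> 1"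
  shows "continuous_on S (\<lambda>A. G2 l r \<alpha> \<beta> Q0 A \<delta>)"
proof -
  have "0 < Sa Q0 A + \<delta> * Q0 \<and> 0 < Sb l r \<alpha> \<beta> Q0 A + \<delta> * Q0" if "A \<in> S" for A
    using nonzero[OF that] assms(2) by (simp add: Sa_add_mult_pos Sb_add_mult_pos)
  then show ?thesis
    unfolding G2_def NN_def
    by (intro continuous_intros continuous_on_Sa continuous_on_Sb) fastforce+
qed

lemma has_real_derivative_sqrt_add_square:
  fixes f :: "real \<Rightarrow> real"
  assumes "(f has_real_derivative f') (at x)" and "0 < q\<^sup>2 + (f x)\<^sup>2"
  shows "((\<lambda>x. sqrt (q\<^sup>2 + (f x)\<^sup>2)) has_real_derivative f x * f' / sqrt (q\<^sup>2 + (f x)\<^sup>2)) (at x)"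
  using assms by (auto intro!: derivative_eq_intros simp: field_simps)

lemma Sa_has_real_derivative:
  assumes "0 < Sa Q0 A"
  shows "(Sa Q0 has_real_derivative A / Sa Q0 A) (at A)"
  using has_real_derivative_sqrt_add_square[OF DERIV_ident, where x=A and q=Q0] assms
  by (simp add: Sa_def [abs_def])

lemma Sb_has_real_derivative:
  assumes "0 < Sb l r \<alpha> \<beta> Q0 A"
  shows "(Sb l r \<alpha> \<beta> Q0 has_real_derivative
           - ((1 - \<beta>) / \<alpha>) * BB l r \<alpha> \<beta> A / Sb l r \<alpha> \<beta> Q0 A) (at A)"
  using has_real_derivative_sqrt_add_square[OF BB_has_real_derivative, where x=A and q=Q0] assms
  by (simp add: Sb_def [abs_def] mult.commute)

lemma NN_has_real_derivative:
  assumes "0 < Sa Q0 A" and "0 < Sb l r \<alpha> \<beta> Q0 A"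
  shows "(NN l r \<alpha> \<beta> Q0 has_real_derivative
           1 + A / Sa Q0 A + (1 - \<beta>) / \<alpha> * BB l r \<alpha> \<beta> A / Sb l r \<alpha> \<beta> Q0 A) (at A)"
  unfolding NN_def [abs_def]
  by (rule derivative_eq_intros Sa_has_real_derivative Sb_has_real_derivative assms refl)+
    simp

theorem lemma3p4:
  fixes l r \<alpha> \<beta> \<delta> :: real
  assumes "l > 0" and "r > 0" and "0 < \<alpha>" and "\<alpha> < \<beta>" and "\<beta> < 1"
    and "-1 < \<delta>" and "\<delta> < 1"
  defines "AM \<equiv> l + \<alpha> / (1 - \<beta>) * r"
  shows "(\<forall>Q0. continuous_on {0<..<AM} (\<lambda>A. G1 l r \<alpha> \<beta> Q0 A \<delta>)
              \<and> continuous_on {0<..<AM} (\<lambda>A. G2 l r \<alpha> \<beta> Q0 A \<delta>))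
       \<and> (\<forall>Q0. \<forall>A\<in>{0<..<AM}. (\<lambda>x. NN l r \<alpha> \<beta> Q0 x) differentiable (at A)
              \<and> deriv (\<lambda>x. NN l r \<alpha> \<beta> Q0 x) A > 0)
       \<and> (\<forall>A\<in>{0<..<AM}. BB l r \<alpha> \<beta> differentiable (at A)
              \<and> deriv (BB l r \<alpha> \<beta>) A < 0)"
proof -
  have pos: "0 < A \<and> 0 < BB l r \<alpha> \<beta> A" if "A \<in> {0<..<AM}" for A
    using that BB_pos[of \<alpha> \<beta> A l r] assms unfolding AM_def by auto
  then have nonzero: "A \<noteq> 0 \<and> BB l r \<alpha> \<beta> A \<noteq> 0" if "A \<in> {0<..<AM}" for A
    using that by fastforce
  have slope: "0 < (1 - \<beta>) / \<alpha>" using assms by simp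
  have "\<bar>\<delta>\<bar> \<le> 1" using assms by auto
  then have continuity: "continuous_on {0<..<AM} (\<lambda>A. G1 l r \<alpha> \<beta> Q0 A \<delta>)
      \<and> continuous_on {0<..<AM} (\<lambda>A. G2 l r \<alpha> \<beta> Q0 A \<delta>)" for Q0
    by (intro conjI continuous_on_G1 continuous_on_G2 nonzero)
  have NN_increasing: "NN l r \<alpha> \<beta> Q0 differentiable (at A) \<and> 0 < deriv (NN l r \<alpha> \<beta> Q0) A"
    if "A \<in> {0<..<AM}" for Q0 A
  proof -
    have "0 < Sa Q0 A" "0 < Sb l r \<alpha> \<beta> Q0 A"
      using abs_less_Sa abs_less_Sb pos[OF that] by (metis abs_ge_zero le_less_trans less_irrefl)+
    note NN' = NN_has_real_derivative[OF this]
    have "0 < 1 + A / Sa Q0 A + (1 - \<beta>) / \<alpha> * BB l r \<alpha> \<beta> A / Sb l r \<alpha> \<beta> Q0 A"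
      using pos[OF that] assms(3,5) \<open>0 < Sa Q0 A\<close> \<open>0 < Sb l r \<alpha> \<beta> Q0 A\<close>
      by (intro add_pos_pos divide_pos_pos mult_pos_pos) auto
    then show ?thesis
      unfolding real_differentiable_def DERIV_imp_deriv[OF NN'] using NN' by auto
  qed
  have "BB l r \<alpha> \<beta> differentiable (at A) \<and> deriv (BB l r \<alpha> \<beta>) A < 0" for A
    unfolding real_differentiable_def DERIV_imp_deriv[OF BB_has_real_derivative]
    using slope by (auto intro: BB_has_real_derivative)
  with continuity NN_increasing show ?thesis by auto
qed

end
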